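(* Let $C_1,C_2,\ell,r>0$ with $C_2\le C_1$, and let $T$ be a tree such that $\Delta(T)\le C_1$, all but $r$ vertices of $T$ have degree at most $C_2$, and $|V(T)|\ge \ell$. Then there exist disjoint vertex sets $A_1,\dots,A_s\subseteq V(T)$ such that: $V(T)=\bigcup_{i=1}^s A_i$; $T[A_i]$ is connected for each $1\le i\le s$; $\ell\le |A_i|\le C_1\ell$ for each $1\le i\le r$; and $\ell\le |A_i|\le C_2\ell$ for each $r<i\le s$.
   Context: $\Delta(T)$ denotes the maximum degree of $T$, and $T[A]$ denotes the subgraph of $T$ induced by $A$. *)

theory Defs
  imports Main
begin

definition simple_graph :: "'a set \<Rightarrow> ('a \<Rightarrow> 'a \<Rightarrow> bool) \<Rightarrow> bool" where
  "simple_graph V E \<longleftrightarrow> finite V \<and> (\<forall>x y. E x y \<longrightarrow> x \<in> V \<and> y \<in> V)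
     \<and> (\<forall>x y. E x y \<longrightarrow> E y x) \<and> (\<forall>x. \<not> E x x)"

definition degree :: "'a set \<Rightarrow> ('a \<Rightarrow> 'a \<Rightarrow> bool) \<Rightarrow> 'a \<Rightarrow> nat" where
  "degree V E v = card {u \<in> V. E v u}"

definition walk_in :: "'a set \<Rightarrow> ('a \<Rightarrow> 'a \<Rightarrow> bool) \<Rightarrow> 'a list \<Rightarrow> bool" where
  "walk_in A E xs \<longleftrightarrow> xs \<noteq> [] \<and> set xs \<subseteq> A \<and> (\<forall>i. Suc i < length xs \<longrightarrow> E (xs ! i) (xs ! Suc i))"

definition induced_connected :: "('a \<Rightarrow> 'a \<Rightarrow> bool) \<Rightarrow> 'a set \<Rightarrow> bool" where
  "induced_connected E A \<longleftrightarrow> A \<noteq> {} \<and>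
     (\<forall>x\<in>A. \<forall>y\<in>A. \<exists>xs. walk_in A E xs \<and> hd xs = x \<and> last xs = y)"

definition is_cycle :: "'a set \<Rightarrow> ('a \<Rightarrow> 'a \<Rightarrow> bool) \<Rightarrow> 'a list \<Rightarrow> bool" where
  "is_cycle V E xs \<longleftrightarrow> length xs \<ge> 3 \<and> distinct xs \<and> walk_in V E xs \<and> E (last xs) (hd xs)"

definition is_tree :: "'a set \<Rightarrow> ('a \<Rightarrow> 'a \<Rightarrow> bool) \<Rightarrow> bool" where
  "is_tree V E \<longleftrightarrow> simple_graph V E \<and> induced_connected E V \<and> (\<nexists>xs. is_cycle V E xs)"

end

theory Submission
  imports Defs "HOL-Library.Disjoint_Sets"
begin

text \<open>
  Root it, i.e.\ fix parent pointers towards a root (obtained from shortest walks), and cut off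
  parts greedily. In a rooted subtree \<open>W\<close> with at least \<open>l\<close> vertices, either \<open>|W| \<le> l \<cdot> max 1 (deg v)\<close> for some \<open>v \<in> W\<close> and \<open>W\<close> is the last part,
  or take a lowest vertex \<open>x\<close> whose subtree in \<open>W\<close> has at least \<open>l\<close> vertices. The subtrees of its
  children have fewer than \<open>l\<close> vertices each, and a non-root \<open>x\<close> has at most \<open>deg x - 1\<close>
  children, so the subtree of \<open>x\<close> has between \<open>l\<close> and \<open>l \<cdot> deg x\<close> vertices and removing it
  leaves a rooted subtree with at least \<open>l\<close> vertices. Every part \<open>P\<close> thus contains a vertex \<open>v\<close>
  with \<open>l \<le> |P| \<le> l \<cdot> max 1 (deg v)\<close>. At most \<open>r\<close> parts contain a vertex of degree \<open>> C\<^sub>2\<close>;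
  listing these first gives the required order.
\<close>

lemma walk_in_iff_successively:
  "walk_in A E xs \<longleftrightarrow> xs \<noteq> [] \<and> set xs \<subseteq> A \<and> successively E xs"
  by (simp add: walk_in_def successively_conv_nth)

lemma walk_in_Cons:
  "walk_in A E (x # xs) \<longleftrightarrow> x \<in> A \<and> (xs = [] \<or> E x (hd xs) \<and> walk_in A E xs)"
  by (auto simp: walk_in_iff_successively successively_Cons)

lemma walk_in_rev:
  assumes "\<And>x y. E x y \<Longrightarrow> E y x" and "walk_in A E xs"
  shows "walk_in A E (rev xs)"
  using assms by (auto simp: walk_in_iff_successively elim: successively_mono)

lemma walk_in_join:
  assumes "walk_in A E xs" and "walk_in A E ys" and "last xs = hd ys"
  shows "walk_in A E (xs @ tl ys) \<and> hd (xs @ tl ys) = hd xs \<and> last (xs @ tl ys) = last ys"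
  using assms
  by (cases ys) (auto simp: walk_in_iff_successively successively_append_iff successively_Cons)

lemma induced_connected_if_walks_to:
  assumes sym: "\<And>x y. E x y \<Longrightarrow> E y x" and "c \<in> A"
    and walk_to_c: "\<And>y. y \<in> A \<Longrightarrow> \<exists>xs. walk_in A E xs \<and> hd xs = y \<and> last xs = c"
  shows "induced_connected E A"
  unfolding induced_connected_def
proof (intro conjI ballI)
  show "A \<noteq> {}" using \<open>c \<in> A\<close> by blast
next
  fix y z assume "y \<in> A" "z \<in> A"
  obtain ys where ys: "walk_in A E ys" "hd ys = y" "last ys = c" using walk_to_c \<open>y \<in> A\<close> by blast
  obtain zs where zs: "walk_in A E zs" "hd zs = z" "last zs = c" using walk_to_c \<open>z \<in> A\<close> by blast
  have "zs \<noteq> []" using zs(1) by (simp add: walk_in_def)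
  then have "walk_in A E (rev zs)" "hd (rev zs) = c" "last (rev zs) = z"
    using walk_in_rev[OF sym zs(1)] zs by (simp_all add: hd_rev last_rev)
  then show "\<exists>xs. walk_in A E xs \<and> hd xs = y \<and> last xs = z"
    using walk_in_join[OF ys(1), of "rev zs"] ys by metis
qed

definition walk_dist :: "'a set \<Rightarrow> ('a \<Rightarrow> 'a \<Rightarrow> bool) \<Rightarrow> 'a \<Rightarrow> 'a \<Rightarrow> nat" where
  "walk_dist A E x y =
     (LEAST n. \<exists>xs. walk_in A E xs \<and> hd xs = x \<and> last xs = y \<and> length xs = Suc n)"

lemma shortest_walk_exists:
  assumes "walk_in A E xs" "hd xs = x" "last xs = y"
  shows "\<exists>ys. walk_in A E ys \<and> hd ys = x \<and> last ys = y \<and> length ys = Suc (walk_dist A E x y)"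
  unfolding walk_dist_def
proof (rule LeastI_ex)
  show "\<exists>n ys. walk_in A E ys \<and> hd ys = x \<and> last ys = y \<and> length ys = Suc n"
    using assms by (intro exI[of _ "length xs - 1"] exI[of _ xs]) (auto simp: walk_in_def)
qed

lemma walk_dist_le_length:
  assumes "walk_in A E xs" "hd xs = x" "last xs = y" "length xs = Suc n"
  shows "walk_dist A E x y \<le> n"
  unfolding walk_dist_def by (rule Least_le) (use assms in blast)

lemma walk_dist_decreasing_neighbour:
  assumes "walk_in A E xs" "hd xs = x" "last xs = y" "x \<noteq> y"
  shows "\<exists>z\<in>A. E x z \<and> walk_dist A E z y < walk_dist A E x y"
proof -
  obtain ys where ys: "walk_in A E ys" "hd ys = x" "last ys = y" "length ys = Suc (walk_dist A E x y)"
    using shortest_walk_exists[OF assms(1-3)] by blast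
  then obtain zs where "ys = x # zs" by (cases ys) (auto simp: walk_in_def)
  with ys \<open>x \<noteq> y\<close> have "zs \<noteq> []" "E x (hd zs)" "walk_in A E zs" "last zs = y"
    by (auto simp: walk_in_Cons)
  moreover from this \<open>ys = x # zs\<close> ys(4) obtain n where "length zs = Suc n" "walk_dist A E x y = Suc n"
    by (cases zs) auto
  ultimately have "walk_dist A E (hd zs) y < walk_dist A E x y"
    using walk_dist_le_length[of A E zs "hd zs" y n] by simp
  moreover have "hd zs \<in> A" using \<open>zs \<noteq> []\<close> \<open>walk_in A E zs\<close> by (auto simp: walk_in_def)
  ultimately show ?thesis using \<open>E x (hd zs)\<close> by blast
qed

definition degree_bounded_part :: "'a set \<Rightarrow> ('a \<Rightarrow> 'a \<Rightarrow> bool) \<Rightarrow> nat \<Rightarrow> 'a set \<Rightarrow> bool" where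
  "degree_bounded_part V E l P \<longleftrightarrow> induced_connected E P \<and> l \<le> card P
     \<and> (\<exists>v\<in>P. card P \<le> l * max 1 (degree V E v))"

lemma add_mult_pred_le_mult_max:
  fixes k l :: nat
  assumes "0 < l"
  shows "1 + k * (l - 1) \<le> l * max 1 k"
  using assms by (cases k; cases l) (auto simp: algebra_simps)

lemma mult_pred_add_le_mult:
  fixes k d l :: nat
  assumes "k < d"
  shows "k * (l - 1) + l \<le> l * d"
proof -
  have "k * (l - 1) \<le> (d - 1) * (l - 1)" using assms by (intro mult_le_mono1) simp
  moreover have "(d - 1) * (l - 1) + l \<le> l * d"
    using assms by (cases d; cases l) (auto simp: algebra_simps)
  ultimately show ?thesis by linarith
qed

text \<open>Parent pointers of a spanning tree rooted at \<open>rt\<close>; \<open>depth\<close> certifies that following them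
  from any vertex reaches the root.\<close>

locale parent_map =
  fixes V :: "'a set" and E :: "'a \<Rightarrow> 'a \<Rightarrow> bool" and rt :: 'a
    and par :: "'a \<Rightarrow> 'a" and depth :: "'a \<Rightarrow> nat"
  assumes finite_V: "finite V"
    and sym: "E x y \<Longrightarrow> E y x"
    and root_in_V: "rt \<in> V"
    and par_root: "par rt = rt"
    and par_in_V: "x \<in> V \<Longrightarrow> par x \<in> V"
    and edge_par: "x \<in> V \<Longrightarrow> x \<noteq> rt \<Longrightarrow> E x (par x)"
    and depth_par_less: "x \<in> V \<Longrightarrow> x \<noteq> rt \<Longrightarrow> depth (par x) < depth x"

lemma connected_imp_parent_map:
  assumes "finite V" "\<And>x y. E x y \<Longrightarrow> E y x" "induced_connected E V" "rt \<in> V"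
  shows "\<exists>par depth. parent_map V E rt par depth"
proof -
  define depth where "depth x = walk_dist V E x rt" for x
  have step: "\<exists>y. y \<in> V \<and> E x y \<and> depth y < depth x" if "x \<in> V" "x \<noteq> rt" for x
    using walk_dist_decreasing_neighbour[of V E _ x rt] assms(3,4) that
    unfolding depth_def induced_connected_def by blast
  define par where
    "par x = (if x \<in> V \<and> x \<noteq> rt then SOME y. y \<in> V \<and> E x y \<and> depth y < depth x else rt)" for x
  have "par x \<in> V \<and> E x (par x) \<and> depth (par x) < depth x" if "x \<in> V" "x \<noteq> rt" for x
    using someI_ex[OF step[OF that]] that by (simp add: par_def)
  then have "parent_map V E rt par depth"
    using assms by unfold_locales (auto simp: par_def)
  then show ?thesis by blast
qed

context parent_map
begin

definition descendants :: "'a \<Rightarrow> 'a set" where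
  "descendants x = {y. \<exists>k. (par ^^ k) y = x}"

text \<open>The condition \<open>c \<noteq> x\<close> keeps the root, its own parent, out of its children.\<close>

definition children :: "'a set \<Rightarrow> 'a \<Rightarrow> 'a set" where
  "children W x = {c \<in> W. c \<noteq> x \<and> par c = x}"

definition rooted_subtree :: "'a set \<Rightarrow> bool" where
  "rooted_subtree W \<longleftrightarrow> W \<subseteq> V \<and> rt \<in> W \<and> (\<forall>y\<in>W. par y \<in> W)"

lemma funpow_par_root: "(par ^^ k) rt = rt"
  by (induction k) (simp_all add: par_root)

lemma funpow_Suc_par: "(par ^^ Suc k) y = (par ^^ k) (par y)"
  by (simp add: funpow_Suc_right del: funpow.simps)

lemma self_in_descendants: "x \<in> descendants x"
  unfolding descendants_def by (auto intro: exI[of _ 0])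

lemma in_descendants_if_par:
  assumes "par y \<in> descendants x"
  shows "y \<in> descendants x"
proof -
  obtain k where "(par ^^ k) (par y) = x" using assms unfolding descendants_def by blast
  then have "(par ^^ Suc k) y = x" by (simp only: funpow_Suc_par)
  then show ?thesis unfolding descendants_def by blast
qed

lemma par_in_descendants:
  assumes "y \<in> descendants x" "y \<noteq> x"
  shows "par y \<in> descendants x"
proof -
  obtain k where "(par ^^ k) y = x" using assms(1) unfolding descendants_def by blast
  with assms(2) obtain j where "(par ^^ Suc j) y = x" by (cases k) auto
  then show ?thesis unfolding descendants_def funpow_Suc_par by blast
qed

lemma root_notin_descendants: "x \<noteq> rt \<Longrightarrow> rt \<notin> descendants x"
  unfolding descendants_def by (simp add: funpow_par_root)

lemma in_descendants_root: "y \<in> V \<Longrightarrow> y \<in> descendants rt"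
proof (induction "depth y" arbitrary: y rule: less_induct)
  case less
  show ?case
  proof (cases "y = rt")
    case True then show ?thesis using self_in_descendants by simp
  next
    case False
    then have "par y \<in> V" "depth (par y) < depth y"
      using less.prems par_in_V depth_par_less by auto
    then have "par y \<in> descendants rt" using less.hyps by blast
    then show ?thesis by (rule in_descendants_if_par)
  qed
qed

lemma rooted_subtree_V: "rooted_subtree V"
  unfolding rooted_subtree_def using root_in_V par_in_V by blast

lemma rooted_subtree_finite: "rooted_subtree W \<Longrightarrow> finite W"
  unfolding rooted_subtree_def using finite_V finite_subset by blast

lemma rooted_subtree_funpow_par:
  "rooted_subtree W \<Longrightarrow> y \<in> W \<Longrightarrow> (par ^^ k) y \<in> W"
  unfolding rooted_subtree_def by (induction k) auto

lemma rooted_subtree_descendants_root: "rooted_subtree W \<Longrightarrow> descendants rt \<inter> W = W"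
  unfolding rooted_subtree_def using in_descendants_root by blast

lemma rooted_subtree_Diff_descendants:
  assumes "rooted_subtree W" "x \<noteq> rt"
  shows "rooted_subtree (W - descendants x)"
  using assms root_notin_descendants in_descendants_if_par unfolding rooted_subtree_def by blast

lemma walk_to_ancestor:
  assumes "rooted_subtree W" "y \<in> descendants x \<inter> W"
  shows "\<exists>xs. walk_in (descendants x \<inter> W) E xs \<and> hd xs = y \<and> last xs = x"
  using assms(2)
proof (induction "depth y" arbitrary: y rule: less_induct)
  case less
  show ?case
  proof (cases "y = x")
    case True
    then show ?thesis using less.prems by (intro exI[of _ "[y]"]) (simp add: walk_in_def)
  next
    case False
    have "y \<in> V" using less.prems assms(1) unfolding rooted_subtree_def by blast
    have "y \<noteq> rt"
      using less.prems False funpow_par_root unfolding descendants_def by auto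
    have "par y \<in> descendants x \<inter> W"
      using less.prems False par_in_descendants assms(1) unfolding rooted_subtree_def by blast
    moreover have "depth (par y) < depth y" using depth_par_less \<open>y \<in> V\<close> \<open>y \<noteq> rt\<close> by blast
    ultimately obtain xs where xs: "walk_in (descendants x \<inter> W) E xs" "hd xs = par y" "last xs = x"
      using less.hyps by blast
    have "xs \<noteq> []" using xs(1) by (simp add: walk_in_def)
    moreover have "E y (hd xs)" using xs(2) edge_par \<open>y \<in> V\<close> \<open>y \<noteq> rt\<close> by simp
    ultimately have "walk_in (descendants x \<inter> W) E (y # xs)"
      using less.prems xs(1) by (simp add: walk_in_Cons)
    then show ?thesis using xs \<open>xs \<noteq> []\<close> by (intro exI[of _ "y # xs"]) simp
  qed
qed

lemma connected_descendants:
  "rooted_subtree W \<Longrightarrow> x \<in> W \<Longrightarrow> induced_connected E (descendants x \<inter> W)"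
  by (rule induced_connected_if_walks_to[OF sym, where c = x])
    (use self_in_descendants walk_to_ancestor in auto)

lemma descendants_subset_insert_children:
  assumes "rooted_subtree W"
  shows "descendants x \<inter> W \<subseteq> insert x (\<Union>c\<in>children W x. descendants c \<inter> W)"
proof
  fix y assume y: "y \<in> descendants x \<inter> W"
  show "y \<in> insert x (\<Union>c\<in>children W x. descendants c \<inter> W)"
  proof (cases "y = x")
    case False
    obtain k where "(par ^^ k) y = x" "\<forall>i<k. (par ^^ i) y \<noteq> x"
      using y exists_least_iff[of "\<lambda>k. (par ^^ k) y = x"] unfolding descendants_def by blast
    moreover from this False obtain j where "k = Suc j" by (cases k) auto
    ultimately have "(par ^^ j) y \<in> children W x"
      using rooted_subtree_funpow_par[OF assms] y unfolding children_def by auto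
    moreover have "y \<in> descendants ((par ^^ j) y)" unfolding descendants_def by blast
    ultimately show ?thesis using y by blast
  qed simp
qed

lemma depth_less_child:
  assumes "rooted_subtree W" "c \<in> children W x"
  shows "depth x < depth c"
proof -
  have "c \<in> V" "c \<noteq> rt" "par c = x"
    using assms par_root unfolding rooted_subtree_def children_def by auto
  then show ?thesis using depth_par_less by blast
qed

lemma children_subset_neighbours:
  "rooted_subtree W \<Longrightarrow> children W x \<subseteq> {u \<in> V. E x u}"
  unfolding rooted_subtree_def children_def using edge_par sym par_root by fastforce

lemma card_children_le_degree:
  "rooted_subtree W \<Longrightarrow> card (children W x) \<le> degree V E x"
  unfolding degree_def using children_subset_neighbours finite_V by (simp add: card_mono)

lemma card_children_less_degree:
  assumes "rooted_subtree W" "x \<in> V" "x \<noteq> rt"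
  shows "card (children W x) < degree V E x"
proof -
  have "par x \<notin> children W x" using depth_less_child[OF assms(1)] depth_par_less assms(2,3) by fastforce
  moreover have "par x \<in> {u \<in> V. E x u}" using par_in_V edge_par assms(2,3) by blast
  ultimately show ?thesis
    unfolding degree_def using children_subset_neighbours[OF assms(1)] finite_V
    by (intro psubset_card_mono) auto
qed

lemma card_descendants_le:
  assumes "rooted_subtree W" and small: "\<forall>c\<in>children W x. card (descendants c \<inter> W) < l"
  shows "card (descendants x \<inter> W) \<le> 1 + card (children W x) * (l - 1)"
proof -
  have "finite W" using assms(1) by (rule rooted_subtree_finite)
  then have fin: "finite (children W x)" unfolding children_def by simp
  have small': "card (descendants c \<inter> W) \<le> l - 1" if "c \<in> children W x" for c
    using small[rule_format, OF that] by linarith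
  have "card (descendants x \<inter> W) \<le> card (insert x (\<Union>c\<in>children W x. descendants c \<inter> W))"
    using descendants_subset_insert_children[OF assms(1)] \<open>finite W\<close> fin by (intro card_mono) auto
  also have "\<dots> \<le> 1 + card (\<Union>c\<in>children W x. descendants c \<inter> W)"
    by (simp add: card_insert_le_m1)
  also have "\<dots> \<le> 1 + (\<Sum>c\<in>children W x. card (descendants c \<inter> W))"
    using card_UN_le[OF fin, of "\<lambda>c. descendants c \<inter> W"] by (simp del: Int_UN_distrib2 UN_extend_simps)
  also have "\<dots> \<le> 1 + card (children W x) * (l - 1)"
    using sum_bounded_above[of "children W x" "\<lambda>c. card (descendants c \<inter> W)", OF small'] by simp
  finally show ?thesis .
qed

lemma exists_lowest_heavy_vertex:
  assumes "rooted_subtree W" "l \<le> card W"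
  obtains x where "x \<in> W" "l \<le> card (descendants x \<inter> W)"
    "\<forall>c\<in>children W x. card (descendants c \<inter> W) < l"
proof -
  define S where "S = {x \<in> W. l \<le> card (descendants x \<inter> W)}"
  have "finite S" using rooted_subtree_finite[OF assms(1)] unfolding S_def by simp
  moreover have "rt \<in> S"
    using assms rooted_subtree_descendants_root unfolding S_def rooted_subtree_def by simp
  ultimately have "Max (depth ` S) \<in> depth ` S" by (intro Max_in) auto
  then obtain x where "x \<in> S" "depth x = Max (depth ` S)" by auto
  with \<open>finite S\<close> have lowest: "depth c \<le> depth x" if "c \<in> S" for c
    using that by simp
  show ?thesis
  proof (rule that)
    show "x \<in> W" "l \<le> card (descendants x \<inter> W)" using \<open>x \<in> S\<close> unfolding S_def by auto
    show "\<forall>c\<in>children W x. card (descendants c \<inter> W) < l"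
    proof
      fix c assume c: "c \<in> children W x"
      then have "c \<notin> S" using depth_less_child[OF assms(1) c] lowest by (meson not_le)
      moreover have "c \<in> W" using c unfolding children_def by simp
      ultimately show "card (descendants c \<inter> W) < l" unfolding S_def by simp
    qed
  qed
qed

lemma lowest_heavy_subtree_bounds:
  assumes "0 < l" "rooted_subtree W"
    and large: "\<forall>v\<in>W. l * max 1 (degree V E v) < card W"
    and x: "x \<in> W" "l \<le> card (descendants x \<inter> W)"
      "\<forall>c\<in>children W x. card (descendants c \<inter> W) < l"
  shows "x \<noteq> rt" "degree_bounded_part V E l (descendants x \<inter> W)"
    "l \<le> card (W - descendants x)"
proof -
  define P where "P = descendants x \<inter> W"
  define k where "k = card (children W x)"
  define d where "d = degree V E x"
  have card_P: "card P \<le> 1 + k * (l - 1)"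
    unfolding P_def k_def using card_descendants_le[OF assms(2) x(3)] .
  show "x \<noteq> rt"
  proof
    assume "x = rt"
    then have "card W \<le> 1 + k * (l - 1)"
      using card_P rooted_subtree_descendants_root[OF assms(2)] unfolding P_def by simp
    also have "\<dots> \<le> l * max 1 k" using assms(1) by (rule add_mult_pred_le_mult_max)
    also have "\<dots> \<le> l * max 1 (degree V E x)"
      using card_children_le_degree[OF assms(2), of x] unfolding k_def
      by (intro mult_le_mono2 max.mono) simp_all
    finally show False using large x(1) by fastforce
  qed
  then have "k < d"
    using card_children_less_degree[OF assms(2)] x(1) assms(2)
    unfolding k_def d_def rooted_subtree_def by blast
  then have "card P + l \<le> l * d + 1" "max 1 d = d"
    using card_P mult_pred_add_le_mult[of k d l] by auto
  moreover have "l * d < card W" using large x(1) \<open>max 1 d = d\<close> unfolding d_def by fastforce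
  ultimately have "card P \<le> l * max 1 d" "card P + l \<le> card W" using assms(1) by linarith+
  then show "degree_bounded_part V E l P"
    unfolding degree_bounded_part_def d_def P_def
    using connected_descendants[OF assms(2) x(1)] x(1,2) self_in_descendants by blast
  have "card (W - descendants x) = card W - card P"
    unfolding P_def using rooted_subtree_finite[OF assms(2)] by (simp add: card_Diff_subset_Int Int_commute)
  then show "l \<le> card (W - descendants x)" using \<open>card P + l \<le> card W\<close> by linarith
qed

lemma rooted_subtree_partition:
  assumes "0 < l" "rooted_subtree W" "l \<le> card W"
  shows "\<exists>\<P>. partition_on W \<P> \<and> (\<forall>P\<in>\<P>. degree_bounded_part V E l P)"
  using assms(2,3)
proof (induction "card W" arbitrary: W rule: less_induct)
  case less
  show ?case
  proof (cases "\<exists>v\<in>W. card W \<le> l * max 1 (degree V E v)")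
    case True
    have "rt \<in> W" using less.prems(1) unfolding rooted_subtree_def by blast
    then have "induced_connected E W"
      using connected_descendants[OF less.prems(1)] rooted_subtree_descendants_root[OF less.prems(1)]
      by metis
    then have "degree_bounded_part V E l W"
      using True less.prems(2) unfolding degree_bounded_part_def by blast
    then show ?thesis using partition_on_space[of W] \<open>rt \<in> W\<close> by blast
  next
    case False
    then have large: "\<forall>v\<in>W. l * max 1 (degree V E v) < card W" by auto
    obtain x where x: "x \<in> W" "l \<le> card (descendants x \<inter> W)"
      "\<forall>c\<in>children W x. card (descendants c \<inter> W) < l"
      using exists_lowest_heavy_vertex[OF less.prems] by blast
    define P where "P = descendants x \<inter> W"
    note bounds = lowest_heavy_subtree_bounds[OF assms(1) less.prems(1) large x, folded P_def]
    have "W - descendants x = W - P" "x \<in> P" unfolding P_def using x(1) self_in_descendants by auto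
    then have "card (W - P) < card W"
      using rooted_subtree_finite[OF less.prems(1)] x(1) by (intro psubset_card_mono) auto
    moreover have "rooted_subtree (W - P)"
      using rooted_subtree_Diff_descendants[OF less.prems(1) bounds(1)] \<open>W - descendants x = W - P\<close> by simp
    ultimately obtain \<Q> where \<Q>: "partition_on (W - P) \<Q>" "\<forall>Q\<in>\<Q>. degree_bounded_part V E l Q"
      using less.hyps bounds(3) \<open>W - descendants x = W - P\<close> by fastforce
    have "partition_on W (insert P \<Q>)"
      using \<Q>(1) \<open>x \<in> P\<close> partition_onD1[OF \<Q>(1)]
      by (subst partition_on_insert) (auto simp: P_def disjnt_def)
    then show ?thesis using \<Q>(2) bounds(2) by blast
  qed
qed

end

lemma degree_bounded_partition_exists:
  assumes "simple_graph V E" "induced_connected E V" "0 < l" "l \<le> card V"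
  shows "\<exists>\<P>. partition_on V \<P> \<and> (\<forall>P\<in>\<P>. degree_bounded_part V E l P)"
proof -
  obtain rt where "rt \<in> V" using assms(2) unfolding induced_connected_def by blast
  have "finite V" "\<And>x y. E x y \<Longrightarrow> E y x" using assms(1) unfolding simple_graph_def by auto
  then obtain par depth where "parent_map V E rt par depth"
    using connected_imp_parent_map assms(2) \<open>rt \<in> V\<close> by metis
  then interpret parent_map V E rt par depth .
  show ?thesis using rooted_subtree_partition[OF assms(3) rooted_subtree_V assms(4)] .
qed

lemma card_le_if_degree_bounded_part:
  assumes "degree_bounded_part V E l P" "0 < C" "\<forall>v\<in>P. degree V E v \<le> C"
  shows "card P \<le> C * l"
proof -
  obtain v where "v \<in> P" "card P \<le> l * max 1 (degree V E v)"
    using assms(1) unfolding degree_bounded_part_def by blast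
  moreover have "max 1 (degree V E v) \<le> C" using assms(2,3) \<open>v \<in> P\<close> by simp
  ultimately have "card P \<le> l * C" by (meson mult_le_mono2 order_trans)
  then show ?thesis by (simp add: mult.commute)
qed

lemma card_parts_meeting_le:
  assumes "disjoint \<P>" "finite B"
  shows "card {P \<in> \<P>. P \<inter> B \<noteq> {}} \<le> card B"
proof -
  define pick where "pick P = (SOME v. v \<in> P \<inter> B)" for P
  have pick: "pick P \<in> P \<inter> B" if "P \<inter> B \<noteq> {}" for P
    unfolding pick_def using that by (intro someI_ex[of "\<lambda>v. v \<in> P \<inter> B"]) blast
  have "inj_on pick {P \<in> \<P>. P \<inter> B \<noteq> {}}"
  proof (rule inj_onI)
    fix P Q assume P: "P \<in> {P \<in> \<P>. P \<inter> B \<noteq> {}}" and Q: "Q \<in> {P \<in> \<P>. P \<inter> B \<noteq> {}}"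
      and "pick P = pick Q"
    then have "pick P \<in> P \<inter> Q" using pick[of P] pick[of Q] by simp
    then show "P = Q" using assms(1) P Q unfolding disjoint_def by blast
  qed
  moreover have "pick ` {P \<in> \<P>. P \<inter> B \<noteq> {}} \<subseteq> B" using pick by blast
  ultimately show ?thesis using assms(2) by (rule card_inj_on_le)
qed

lemma obtain_list_subset_first:
  assumes "finite A" "B \<subseteq> A"
  obtains xs where "distinct xs" "set xs = A" "\<And>i. card B \<le> i \<Longrightarrow> i < length xs \<Longrightarrow> xs ! i \<notin> B"
proof -
  obtain bs cs where bs: "set bs = B" "distinct bs" and cs: "set cs = A - B" "distinct cs"
    using finite_distinct_list finite_subset finite_Diff assms by metis
  have "length bs = card B" using distinct_card[OF bs(2)] bs(1) by simp
  show ?thesis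
  proof (rule that[of "bs @ cs"])
    show "distinct (bs @ cs)" "set (bs @ cs) = A" using bs cs assms(2) by auto
    show "(bs @ cs) ! i \<notin> B" if "card B \<le> i" "i < length (bs @ cs)" for i
      using that cs(1) nth_mem[of "i - length bs" cs] \<open>length bs = card B\<close>
      by (auto simp: nth_append)
  qed
qed

lemma obtain_partition_list_meeting_first:
  assumes "partition_on V \<P>" "finite V" "finite H"
  obtains As where "set As = \<P>"
    "\<And>i j. i < length As \<Longrightarrow> j < length As \<Longrightarrow> i \<noteq> j \<Longrightarrow> As ! i \<inter> As ! j = {}"
    "\<And>i. card H \<le> i \<Longrightarrow> i < length As \<Longrightarrow> As ! i \<inter> H = {}"
proof -
  define \<Q> where "\<Q> = {P \<in> \<P>. P \<inter> H \<noteq> {}}"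
  have "finite \<P>" "\<Q> \<subseteq> \<P>" using finite_elements[OF assms(2,1)] unfolding \<Q>_def by auto
  then obtain As where As: "distinct As" "set As = \<P>"
    and late: "\<And>i. card \<Q> \<le> i \<Longrightarrow> i < length As \<Longrightarrow> As ! i \<notin> \<Q>"
    by (rule obtain_list_subset_first) blast
  have "card \<Q> \<le> card H"
    unfolding \<Q>_def using partition_onD2[OF assms(1)] assms(3) by (rule card_parts_meeting_le)
  show ?thesis
  proof (rule that[OF As(2)])
    show "As ! i \<inter> As ! j = {}" if "i < length As" "j < length As" "i \<noteq> j" for i j
    proof -
      have "As ! i \<noteq> As ! j" using that As(1) nth_eq_iff_index_eq by blast
      moreover have "As ! i \<in> \<P>" "As ! j \<in> \<P>" using As(2) nth_mem[OF that(1)] nth_mem[OF that(2)] by auto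
      ultimately show ?thesis using partition_onD2[OF assms(1)] unfolding disjoint_def by blast
    qed
    show "As ! i \<inter> H = {}" if "card H \<le> i" "i < length As" for i
      using late[of i] that \<open>card \<Q> \<le> card H\<close> As(2) nth_mem[OF that(2)] unfolding \<Q>_def by auto
  qed
qed

theorem lemma2p1:
  fixes V :: "'a set" and E :: "'a \<Rightarrow> 'a \<Rightarrow> bool"
    and C1 C2 l r :: nat
  assumes "C1 > 0" "C2 > 0" "l > 0" "r > 0" "C2 \<le> C1"
    and "is_tree V E"
    and "\<forall>v\<in>V. degree V E v \<le> C1"
    and "card {v \<in> V. degree V E v > C2} \<le> r"
    and "card V \<ge> l"
  shows "\<exists>As :: 'a set list.
           (\<forall>i<length As. \<forall>j<length As. i \<noteq> j \<longrightarrow> As ! i \<inter> As ! j = {})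
         \<and> V = \<Union>(set As)
         \<and> (\<forall>i<length As. induced_connected E (As ! i))
         \<and> (\<forall>i<length As. i < r \<longrightarrow> l \<le> card (As ! i) \<and> card (As ! i) \<le> C1 * l)
         \<and> (\<forall>i<length As. r \<le> i \<longrightarrow> l \<le> card (As ! i) \<and> card (As ! i) \<le> C2 * l)"
proof -
  have graph: "simple_graph V E" "induced_connected E V" using assms(6) unfolding is_tree_def by auto
  then have "finite V" unfolding simple_graph_def by blast
  obtain \<P> where \<P>: "partition_on V \<P>" "\<forall>P\<in>\<P>. degree_bounded_part V E l P"
    using degree_bounded_partition_exists[OF graph assms(3,9)] by blast
  define H where "H = {v \<in> V. C2 < degree V E v}"
  have "finite H" unfolding H_def using \<open>finite V\<close> by simp
  then obtain As where As: "set As = \<P>"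
      "\<And>i j. i < length As \<Longrightarrow> j < length As \<Longrightarrow> i \<noteq> j \<Longrightarrow> As ! i \<inter> As ! j = {}"
    and late: "\<And>i. card H \<le> i \<Longrightarrow> i < length As \<Longrightarrow> As ! i \<inter> H = {}"
    by (rule obtain_partition_list_meeting_first[OF \<P>(1) \<open>finite V\<close>]) blast
  have part: "degree_bounded_part V E l (As ! i)" "As ! i \<subseteq> V" if "i < length As" for i
    using \<P>(2) partition_onD1[OF \<P>(1)] As(1) nth_mem[OF that] by auto
  show ?thesis
  proof (intro exI[of _ As] conjI allI impI)
    show "As ! i \<inter> As ! j = {}" if "i < length As" "j < length As" "i \<noteq> j" for i j
      using As(2) that .
    show "V = \<Union>(set As)" using partition_onD1[OF \<P>(1)] As(1) by simp
    show "card (As ! i) \<le> C1 * l" if "i < length As" for i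
      using card_le_if_degree_bounded_part[OF part(1)[OF that] assms(1)] assms(7) part(2)[OF that]
      by blast
    show "card (As ! i) \<le> C2 * l" if "i < length As" "r \<le> i" for i
    proof (rule card_le_if_degree_bounded_part[OF part(1)[OF that(1)] assms(2)])
      have "As ! i \<inter> H = {}" using late that assms(8) unfolding H_def by simp
      then show "\<forall>v\<in>As ! i. degree V E v \<le> C2" using part(2)[OF that(1)] not_less unfolding H_def by blast
    qed
  qed (use part(1) in \<open>auto simp: degree_bounded_part_def\<close>)
qed

end
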